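(* Let $W$ be a finite Weyl group acting on a real inner product space $V$, with positive system $\Phi_+$ and Weyl arrangement $\mathcal{A}=\{H_\alpha\mid\alpha\in\Phi_+\}$, and let $\mathbf{a},\mathbf{b}:\mathcal{A}\to\mathbb{Z}_{\ge0}$ be multiplicities. Let $\overline{H_\infty}=\{x_0=0\}\subset\mathbb{R}\oplus V$. Then: (i) for any $X\in L\left(\mathbf{c}\left(\mathcal{A}^{[-\mathbf{a},\mathbf{b}]}\right)\right)$ with $X\subseteq\overline{H_\infty}$, there exists a unique $Y\in L(\mathcal{A})$ such that $X=\mathbf{c}Y\cap\overline{H_\infty}$; (ii) for such $X$ and $Y$, $$\left(\mathbf{c}\left(\mathcal{A}^{[-\mathbf{a},\mathbf{b}]}\right)\right)_X=\mathbf{c}\left((\mathcal{A}_Y)^{[-\mathbf{a}_Y,\mathbf{b}_Y]}\right)=\mathbf{c}\left(\mathcal{A}(W_Y)^{[-\mathbf{a}_Y,\mathbf{b}_Y]}\right),$$ where $\mathbf{a}_Y,\mathbf{b}_Y$ are the restrictions of $\mathbf{a},\mathbf{b}$ to $\mathcal{A}_Y$.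
   Context: For $\alpha\in\Phi_+$ and $k\in\mathbb{Z}$, $H_\alpha=\{\alpha=0\}$ and $H_{\alpha,k}=\{\alpha=k\}$. For a subarrangement $\mathcal{B}\subseteq\mathcal{A}$ and multiplicities $\mathbf{a},\mathbf{b}$ on $\mathcal{B}$, the deformation is the affine arrangement $\mathcal{B}^{[-\mathbf{a},\mathbf{b}]}=\{H_{\alpha,k}\mid \alpha\in\Phi_+,\ H_\alpha\in\mathcal{B},\ k\in\mathbb{Z},\ -\mathbf{a}(H_\alpha)\le k\le\mathbf{b}(H_\alpha)\}$. The coning $\mathbf{c}(\mathcal{C})$ of an affine arrangement $\mathcal{C}$ in $V$ is the central arrangement in $\mathbb{R}\oplus V$ (extra coordinate $x_0$) consisting of $\overline{H_\infty}=\{x_0=0\}$ together with $\mathbf{c}H=\{\alpha-kx_0=0\}$ for each $H=\{\alpha=k\}\in\mathcal{C}$. $L(\cdot)$ denotes the intersection lattice (the set of nonempty intersections of subsets of hyperplanes, including the whole space). For $Y=H_1\cap\dots\cap H_r\in L(\mathcal{A})$, $\mathbf{c}Y=\mathbf{c}H_1\cap\dots\cap\mathbf{c}H_r$. For a central arrangement $\mathcal{C}$ and an element $Z$ of its intersection lattice, the localization is $\mathcal{C}_Z=\{H\in\mathcal{C}\mid Z\subseteq H\}$. $W_Y$ is the parabolic subgroup of $W$ fixing $Y$ pointwise, and $\mathcal{A}(W_Y)$ is the arrangement of its reflecting hyperplanes. *)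

theory Defs
  imports "HOL-Analysis.Analysis"
begin

definition refl :: "'a::euclidean_space \<Rightarrow> 'a \<Rightarrow> 'a" where
  "refl u x = x - (2 * (x \<bullet> u) / (u \<bullet> u)) *\<^sub>R u"

definition root_system :: "'a::euclidean_space set \<Rightarrow> bool" where
  "root_system \<Phi> \<longleftrightarrow> finite \<Phi> \<and> span \<Phi> = UNIV \<and> 0 \<notin> \<Phi> \<and>
     (\<forall>\<alpha>\<in>\<Phi>. \<forall>c::real. c *\<^sub>R \<alpha> \<in> \<Phi> \<longrightarrow> c = 1 \<or> c = -1) \<and>
     (\<forall>\<alpha>\<in>\<Phi>. - \<alpha> \<in> \<Phi>) \<and>
     (\<forall>\<alpha>\<in>\<Phi>. refl \<alpha> ` \<Phi> = \<Phi>) \<and>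
     (\<forall>\<alpha>\<in>\<Phi>. \<forall>\<beta>\<in>\<Phi>. 2 * (\<beta> \<bullet> \<alpha>) / (\<alpha> \<bullet> \<alpha>) \<in> \<int>)"

definition positive_system :: "'a::euclidean_space set \<Rightarrow> 'a set \<Rightarrow> bool" where
  "positive_system \<Phi> P \<longleftrightarrow>
     (\<exists>v. (\<forall>\<alpha>\<in>\<Phi>. v \<bullet> \<alpha> \<noteq> 0) \<and> P = {\<alpha>\<in>\<Phi>. v \<bullet> \<alpha> > 0})"

inductive_set weyl_group :: "'a::euclidean_space set \<Rightarrow> ('a \<Rightarrow> 'a) set"
  for \<Phi> where
  id: "id \<in> weyl_group \<Phi>"
| step: "\<alpha> \<in> \<Phi> \<Longrightarrow> w \<in> weyl_group \<Phi> \<Longrightarrow> refl \<alpha> \<circ> w \<in> weyl_group \<Phi>"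

definition parabolic :: "'a::euclidean_space set \<Rightarrow> 'a set \<Rightarrow> ('a \<Rightarrow> 'a) set" where
  "parabolic \<Phi> Y = {w \<in> weyl_group \<Phi>. \<forall>y\<in>Y. w y = y}"

definition is_reflection :: "('a::euclidean_space \<Rightarrow> 'a) \<Rightarrow> bool" where
  "is_reflection w \<longleftrightarrow> (\<exists>u. u \<noteq> 0 \<and> w = refl u)"

definition refl_arr :: "('a::euclidean_space \<Rightarrow> 'a) set \<Rightarrow> 'a set set" where
  "refl_arr G = {{x. w x = x} | w. w \<in> G \<and> is_reflection w}"

definition hyp :: "'a::euclidean_space \<Rightarrow> 'a set" where
  "hyp \<alpha> = {x. \<alpha> \<bullet> x = 0}"

definition hypk :: "'a::euclidean_space \<Rightarrow> int \<Rightarrow> 'a set" where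
  "hypk \<alpha> k = {x. \<alpha> \<bullet> x = of_int k}"

definition deform :: "'a::euclidean_space set \<Rightarrow> 'a set set \<Rightarrow> ('a set \<Rightarrow> nat)
    \<Rightarrow> ('a set \<Rightarrow> nat) \<Rightarrow> 'a set set" where
  "deform P B a b = {hypk \<alpha> k | \<alpha> k. \<alpha> \<in> P \<and> hyp \<alpha> \<in> B \<and>
      - int (a (hyp \<alpha>)) \<le> k \<and> k \<le> int (b (hyp \<alpha>))}"

text \<open>Hyperplane at infinity {x0 = 0} in R (+) V; first component is x0.\<close>
definition Hinf :: "(real \<times> 'a::euclidean_space) set" where
  "Hinf = {p. fst p = 0}"

text \<open>Coning of an affine hyperplane H = {alpha = k}: {alpha - k x0 = 0}
  (independent of the chosen equation of H).\<close>
definition cone_hyp :: "'a::euclidean_space set \<Rightarrow> (real \<times> 'a) set" where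
  "cone_hyp H = {(x0, x). \<exists>\<alpha> k. \<alpha> \<noteq> 0 \<and> H = {y. \<alpha> \<bullet> y = k} \<and> \<alpha> \<bullet> x - k * x0 = 0}"

definition cone_arr :: "'a::euclidean_space set set \<Rightarrow> (real \<times> 'a) set set" where
  "cone_arr C = insert Hinf (cone_hyp ` C)"

text \<open>Coning of a flat Y of the central arrangement: cY = intersection of the
  cH_i with cH_i = {alpha_i = 0} in R (+) V, i.e. R x Y.\<close>
definition cone_flat :: "'a::euclidean_space set \<Rightarrow> (real \<times> 'a) set" where
  "cone_flat Y = UNIV \<times> Y"

text \<open>Intersection lattice (whole space = empty intersection).\<close>
definition lattice :: "'b set set \<Rightarrow> 'b set set" where
  "lattice C = {\<Inter> S | S. S \<subseteq> C \<and> \<Inter> S \<noteq> {}}"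

definition loc :: "'b set set \<Rightarrow> 'b set \<Rightarrow> 'b set set" where
  "loc C Z = {H \<in> C. Z \<subseteq> H}"

end

theory Submission
  imports Defs
begin

text \<open>A flat X contained in the hyperplane at infinity is determined by its slice
  Y = {x. (0, x) \<in> X}. Since the coning of {\<alpha> = k} meets {x0 = 0} exactly in
  {0} \<times> {\<alpha> = 0}, the slice of an intersection of coned hyperplanes is the
  intersection of the corresponding linear hyperplanes, and X lies in the coning of
  {\<alpha> = k} iff Y lies in {\<alpha> = 0}, independently of k. The last equality holds because
  a root hyperplane contains Y iff the reflection in it lies in W_Y.\<close>

lemma zero_in_cone_hyp_hypk_iff:
  fixes \<alpha> :: "'a::euclidean_space"
  assumes "\<alpha> \<noteq> 0"
  shows "((0::real), x) \<in> cone_hyp (hypk \<alpha> k) \<longleftrightarrow> x \<in> hyp \<alpha>"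
proof
  assume "(0, x) \<in> cone_hyp (hypk \<alpha> k)"
  then obtain \<beta> m where \<beta>: "hypk \<alpha> k = {y. \<beta> \<bullet> y = m}" "\<beta> \<bullet> x = 0"
    unfolding cone_hyp_def by auto
  define p where "p = (of_int k / (\<alpha> \<bullet> \<alpha>)) *\<^sub>R \<alpha>"
  have p: "\<alpha> \<bullet> p = of_int k"
    using assms by (simp add: p_def)
  then have "\<beta> \<bullet> p = m"
    using \<beta>(1) by (auto simp: hypk_def)
  then have "p + x \<in> hypk \<alpha> k"
    using \<beta> by (simp add: inner_add_right)
  then show "x \<in> hyp \<alpha>"
    using p by (simp add: hypk_def hyp_def inner_add_right)
next
  assume "x \<in> hyp \<alpha>"
  then show "((0::real), x) \<in> cone_hyp (hypk \<alpha> k)"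
    unfolding cone_hyp_def hypk_def hyp_def using assms by auto
qed

lemma cone_flat_Int_Hinf_inject:
  assumes "cone_flat Y1 \<inter> Hinf = cone_flat Y2 \<inter> (Hinf :: (real \<times> 'a::euclidean_space) set)"
  shows "Y1 = Y2"
proof (rule set_eqI)
  fix x
  have "((0::real), x) \<in> cone_flat Y1 \<inter> Hinf \<longleftrightarrow> ((0::real), x) \<in> cone_flat Y2 \<inter> Hinf"
    using assms by simp
  then show "x \<in> Y1 \<longleftrightarrow> x \<in> Y2"
    by (simp add: cone_flat_def Hinf_def)
qed

lemma subset_Hinf_eq_cone_flat:
  fixes X :: "(real \<times> 'a::euclidean_space) set"
  assumes "X \<subseteq> Hinf"
  shows "X = cone_flat {x. (0, x) \<in> X} \<inter> Hinf"
proof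
  show "X \<subseteq> cone_flat {x. (0, x) \<in> X} \<inter> Hinf"
  proof
    fix p assume "p \<in> X"
    moreover from this have "fst p = 0"
      using assms by (auto simp: Hinf_def)
    ultimately show "p \<in> cone_flat {x. (0, x) \<in> X} \<inter> Hinf"
      by (cases p) (auto simp: cone_flat_def Hinf_def)
  qed
qed (auto simp: cone_flat_def Hinf_def)

lemma cone_flat_Int_Hinf_subset_cone_hyp_iff:
  fixes \<alpha> :: "'a::euclidean_space"
  assumes "\<alpha> \<noteq> 0"
  shows "cone_flat Y \<inter> Hinf \<subseteq> cone_hyp (hypk \<alpha> k) \<longleftrightarrow> Y \<subseteq> hyp \<alpha>"
proof -
  have "cone_flat Y \<inter> Hinf = (\<lambda>y. (0, y)) ` Y"
    by (auto simp: cone_flat_def Hinf_def image_iff)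
  then show ?thesis
    using zero_in_cone_hyp_hypk_iff[OF assms] by auto
qed

lemma zero_notin_positive_system:
  "positive_system \<Phi> P \<Longrightarrow> 0 \<notin> P"
  by (auto simp: positive_system_def)

lemma positive_system_subset:
  "positive_system \<Phi> P \<Longrightarrow> P \<subseteq> \<Phi>"
  by (auto simp: positive_system_def)

lemma slice_Inter_cone_arr_deform:
  fixes P :: "'a::euclidean_space set"
  assumes "0 \<notin> P" and S: "S \<subseteq> cone_arr (deform P B a b)"
  shows "{x. ((0::real), x) \<in> \<Inter>S}
           = \<Inter>{hyp \<alpha> | \<alpha> k. \<alpha> \<in> P \<and> hyp \<alpha> \<in> B \<and> cone_hyp (hypk \<alpha> k) \<in> S}"
    (is "_ = \<Inter>?T")
proof (rule set_eqI, rule iffI)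
  fix x assume x: "x \<in> {x. ((0::real), x) \<in> \<Inter>S}"
  show "x \<in> \<Inter>?T"
  proof
    fix t assume "t \<in> ?T"
    then obtain \<alpha> k where "t = hyp \<alpha>" "\<alpha> \<in> P" "cone_hyp (hypk \<alpha> k) \<in> S"
      by blast
    with x assms(1) show "x \<in> t"
      using zero_in_cone_hyp_hypk_iff[of \<alpha> x k] by auto
  qed
next
  fix x assume x: "x \<in> \<Inter>?T"
  have "((0::real), x) \<in> H" if "H \<in> S" for H
  proof -
    from that S consider "H = Hinf" | G where "G \<in> deform P B a b" "H = cone_hyp G"
      unfolding cone_arr_def by auto
    then show ?thesis
    proof cases
      case 1
      then show ?thesis by (simp add: Hinf_def)
    next
      case 2
      then obtain \<alpha> k where \<alpha>: "G = hypk \<alpha> k" "\<alpha> \<in> P" "hyp \<alpha> \<in> B"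
        unfolding deform_def by auto
      with 2 that have "hyp \<alpha> \<in> ?T"
        by blast
      with x have "x \<in> hyp \<alpha>"
        by blast
      with 2 \<alpha> assms(1) show ?thesis
        using zero_in_cone_hyp_hypk_iff[of \<alpha> x k] by auto
    qed
  qed
  then show "x \<in> {x. ((0::real), x) \<in> \<Inter>S}" by blast
qed

lemma slice_in_lattice:
  fixes P :: "'a::euclidean_space set"
  assumes "0 \<notin> P" and "X \<in> lattice (cone_arr (deform P B a b))"
  shows "{x. ((0::real), x) \<in> X} \<in> lattice B"
proof -
  obtain S where S: "S \<subseteq> cone_arr (deform P B a b)" "X = \<Inter>S"
    using assms(2) unfolding lattice_def by auto
  let ?T = "{hyp \<alpha> | \<alpha> k. \<alpha> \<in> P \<and> hyp \<alpha> \<in> B \<and> cone_hyp (hypk \<alpha> k) \<in> S}"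
  have "{x. ((0::real), x) \<in> X} = \<Inter>?T"
    using slice_Inter_cone_arr_deform[OF assms(1) S(1)] S(2) by simp
  moreover have "0 \<in> \<Inter>?T" "?T \<subseteq> B"
    by (auto simp: hyp_def)
  ultimately show ?thesis
    unfolding lattice_def by blast
qed

lemma loc_cone_arr_deform:
  fixes P :: "'a::euclidean_space set"
  assumes "0 \<notin> P"
  shows "loc (cone_arr (deform P B a b)) (cone_flat Y \<inter> Hinf)
           = cone_arr (deform P (loc B Y) a b)"
proof -
  have subset_iff: "cone_flat Y \<inter> Hinf \<subseteq> cone_hyp (hypk \<alpha> k) \<longleftrightarrow> hyp \<alpha> \<in> loc B Y"
    if "\<alpha> \<in> P" "hyp \<alpha> \<in> B" for \<alpha> k
    using that assms cone_flat_Int_Hinf_subset_cone_hyp_iff[of \<alpha> Y k]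
    by (auto simp: loc_def)
  have "{H \<in> cone_hyp ` deform P B a b. cone_flat Y \<inter> Hinf \<subseteq> H}
          = cone_hyp ` deform P (loc B Y) a b"
  proof (intro equalityI subsetI)
    fix H assume "H \<in> {H \<in> cone_hyp ` deform P B a b. cone_flat Y \<inter> Hinf \<subseteq> H}"
    then obtain \<alpha> k where H: "H = cone_hyp (hypk \<alpha> k)" "\<alpha> \<in> P" "hyp \<alpha> \<in> B"
        "- int (a (hyp \<alpha>)) \<le> k" "k \<le> int (b (hyp \<alpha>))" "cone_flat Y \<inter> Hinf \<subseteq> H"
      unfolding deform_def by blast
    then have "hypk \<alpha> k \<in> deform P (loc B Y) a b"
      using subset_iff unfolding deform_def by blast
    with H(1) show "H \<in> cone_hyp ` deform P (loc B Y) a b"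
      by blast
  next
    fix H assume "H \<in> cone_hyp ` deform P (loc B Y) a b"
    then obtain \<alpha> k where H: "H = cone_hyp (hypk \<alpha> k)" "\<alpha> \<in> P" "hyp \<alpha> \<in> loc B Y"
        "- int (a (hyp \<alpha>)) \<le> k" "k \<le> int (b (hyp \<alpha>))"
      unfolding deform_def by blast
    then have "hyp \<alpha> \<in> B" "cone_flat Y \<inter> Hinf \<subseteq> H"
      using subset_iff by (auto simp: loc_def)
    with H show "H \<in> {H \<in> cone_hyp ` deform P B a b. cone_flat Y \<inter> Hinf \<subseteq> H}"
      unfolding deform_def by blast
  qed
  then show ?thesis
    unfolding loc_def cone_arr_def by auto
qed

lemma fixpoints_refl:
  fixes u :: "'a::euclidean_space"
  assumes "u \<noteq> 0"
  shows "{x. refl u x = x} = hyp u"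
  using assms by (auto simp: refl_def hyp_def inner_commute)

lemma hyp_in_refl_arr_parabolic_iff:
  assumes "\<alpha> \<in> \<Phi>" "\<alpha> \<noteq> 0"
  shows "hyp \<alpha> \<in> refl_arr (parabolic \<Phi> Y) \<longleftrightarrow> Y \<subseteq> hyp \<alpha>"
proof
  assume "hyp \<alpha> \<in> refl_arr (parabolic \<Phi> Y)"
  then show "Y \<subseteq> hyp \<alpha>"
    by (auto simp: refl_arr_def parabolic_def)
next
  assume "Y \<subseteq> hyp \<alpha>"
  moreover have "refl \<alpha> \<circ> id \<in> weyl_group \<Phi>"
    using assms(1) by (blast intro: weyl_group.intros)
  ultimately have "refl \<alpha> \<in> parabolic \<Phi> Y"
    using fixpoints_refl[OF assms(2)] by (auto simp: parabolic_def)
  moreover have "is_reflection (refl \<alpha>)"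
    using assms(2) by (auto simp: is_reflection_def)
  ultimately show "hyp \<alpha> \<in> refl_arr (parabolic \<Phi> Y)"
    unfolding refl_arr_def using fixpoints_refl[OF assms(2)] by blast
qed

lemma deform_loc_eq_deform_refl_arr_parabolic:
  assumes "P \<subseteq> \<Phi>" "0 \<notin> P"
  shows "deform P (loc (hyp ` P) Y) a b = deform P (refl_arr (parabolic \<Phi> Y)) a b"
proof -
  have "hyp \<alpha> \<in> loc (hyp ` P) Y \<longleftrightarrow> hyp \<alpha> \<in> refl_arr (parabolic \<Phi> Y)" if "\<alpha> \<in> P" for \<alpha>
    using that assms hyp_in_refl_arr_parabolic_iff[of \<alpha> \<Phi> Y]
    by (auto simp: loc_def)
  then show ?thesis
    unfolding deform_def by blast
qed

theorem lemma3p1: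
  fixes \<Phi> P :: "'a::euclidean_space set"
    and a b :: "'a set \<Rightarrow> nat"
    and X :: "(real \<times> 'a) set"
  assumes "root_system \<Phi>"
    and "positive_system \<Phi> P"
    and "X \<in> lattice (cone_arr (deform P (hyp ` P) a b))"
    and "X \<subseteq> Hinf"
  shows "(\<exists>!Y. Y \<in> lattice (hyp ` P) \<and> X = cone_flat Y \<inter> Hinf) \<and>
         (\<forall>Y. Y \<in> lattice (hyp ` P) \<and> X = cone_flat Y \<inter> Hinf \<longrightarrow>
            loc (cone_arr (deform P (hyp ` P) a b)) X
              = cone_arr (deform P (loc (hyp ` P) Y) a b) \<and>
            cone_arr (deform P (loc (hyp ` P) Y) a b)
              = cone_arr (deform P (refl_arr (parabolic \<Phi> Y)) a b))"
proof -
  have P: "P \<subseteq> \<Phi>" "0 \<notin> P"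
    using assms(2) positive_system_subset zero_notin_positive_system by blast+
  have "{x. (0, x) \<in> X} \<in> lattice (hyp ` P)"
    using slice_in_lattice[OF P(2) assms(3)] .
  moreover have "X = cone_flat {x. (0, x) \<in> X} \<inter> Hinf"
    using subset_Hinf_eq_cone_flat[OF assms(4)] .
  ultimately have "\<exists>!Y. Y \<in> lattice (hyp ` P) \<and> X = cone_flat Y \<inter> Hinf"
    using cone_flat_Int_Hinf_inject by metis
  moreover have "loc (cone_arr (deform P (hyp ` P) a b)) X
                   = cone_arr (deform P (loc (hyp ` P) Y) a b) \<and>
                 cone_arr (deform P (loc (hyp ` P) Y) a b)
                   = cone_arr (deform P (refl_arr (parabolic \<Phi> Y)) a b)"
    if "X = cone_flat Y \<inter> Hinf" for Y
    using that loc_cone_arr_deform[OF P(2)] deform_loc_eq_deform_refl_arr_parabolic[OF P]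
    by simp
  ultimately show ?thesis
    by (intro conjI allI impI) (simp_all only:)
qed

end
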